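(* Let $I$ be a single-category instance with $n$ agents, $m$ goods and cardinality constraint $k$ with $m\le kn$. Let $\mathcal{A}^*=(A^*_1,\dots,A^*_n)$ be a utilitarian-optimal allocation, and let $R=\{i:|A^*_i|<k\}$ and $S=\{i:|A^*_i|>k\}$, and suppose $S\neq\emptyset$. Then there exist an agent $i^\dagger\in R$ and a cardinal allocation $\mathcal{A}$ such that $$\text{USW}(\mathcal{A})\ge 1+\sum_{i\in S}\frac{k}{|A^*_i|}\bigl(u_i(A^*_i)-u_{i^\dagger}(A^*_i)\bigr).$$
   Context: Each agent $i$ has an additive utility function $u_i:2^M\to\mathbb{R}_{\ge 0}$ with $u_i(\emptyset)=0$ and $u_i(M)=1$. An allocation is a partition $(A_1,\dots,A_n)$ of $M$; it is cardinal if $|A_i|\le k$ for all $i$. $\text{USW}(\mathcal{A})=\sum_i u_i(A_i)$; a utilitarian-optimal allocation is one maximizing $\text{USW}$ over all allocations. *)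

theory Defs
  imports Complex_Main
begin

definition util :: "(nat \<Rightarrow> 'g \<Rightarrow> real) \<Rightarrow> nat \<Rightarrow> 'g set \<Rightarrow> real" where
  "util v i B = (\<Sum>g\<in>B. v i g)"

definition normalized_additive :: "nat \<Rightarrow> 'g set \<Rightarrow> (nat \<Rightarrow> 'g \<Rightarrow> real) \<Rightarrow> bool" where
  "normalized_additive n M v \<longleftrightarrow>
     (\<forall>i<n. (\<forall>g\<in>M. v i g \<ge> 0) \<and> util v i M = 1)"

definition is_allocation :: "nat \<Rightarrow> 'g set \<Rightarrow> (nat \<Rightarrow> 'g set) \<Rightarrow> bool" where
  "is_allocation n M A \<longleftrightarrow>
     (\<forall>i<n. \<forall>j<n. i \<noteq> j \<longrightarrow> A i \<inter> A j = {}) \<and> (\<Union>i<n. A i) = M"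

definition is_cardinal :: "nat \<Rightarrow> nat \<Rightarrow> (nat \<Rightarrow> 'g set) \<Rightarrow> bool" where
  "is_cardinal n k A \<longleftrightarrow> (\<forall>i<n. card (A i) \<le> k)"

definition usw :: "nat \<Rightarrow> (nat \<Rightarrow> 'g \<Rightarrow> real) \<Rightarrow> (nat \<Rightarrow> 'g set) \<Rightarrow> real" where
  "usw n v A = (\<Sum>i<n. util v i (A i))"

definition util_optimal :: "nat \<Rightarrow> 'g set \<Rightarrow> (nat \<Rightarrow> 'g \<Rightarrow> real) \<Rightarrow> (nat \<Rightarrow> 'g set) \<Rightarrow> bool" where
  "util_optimal n M v A \<longleftrightarrow> is_allocation n M A \<and>
     (\<forall>B. is_allocation n M B \<longrightarrow> usw n v B \<le> usw n v A)"

end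

theory Submission
  imports Defs "HOL-Library.Disjoint_Sets"
begin

text \<open>Let \<phi> be the average of the valuations of the agents j in R, weighted by their free
  capacities k - |A*_j|. Every agent i in S keeps a k-subset T_i of A*_i that is best for
  v_i - \<phi>, so it retains at least the fraction k/|A*_i| of v_i(A*_i) - \<phi>(A*_i). The
  remaining goods fit into the free capacities of R; spreading each of them over R in proportion
  to the capacities is worth exactly their \<phi>-value, and an integral capacitated assignment
  worth at least as much exists. An optimal allocation gives every good to an agent who values
  it most, so \<phi>(A*_x) \<le> u_x(A*_x) for every agent x, and summing up gives a cardinal allocation
  with USW \<ge> \<phi>(M) + \<Sum>_{i in S} k/|A*_i| (u_i(A*_i) - \<phi>(A*_i)). This bound is affine in \<phi>,
  and \<phi> is a convex combination of the v_j with j in R, so it dominates the bound for some single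
  agent of R, which is the claimed one since v_j(M) = 1.\<close>

lemma weighted_average_le_some:
  fixes s :: "'a \<Rightarrow> nat" and F :: "'a \<Rightarrow> real"
  assumes "finite R" "sum s R > 0"
  obtains j where "j \<in> R" "s j > 0" "(\<Sum>i\<in>R. real (s i) * F i) \<le> real (sum s R) * F j"
proof -
  define P where "P = {i \<in> R. s i > 0}"
  have "finite P" using assms(1) by (simp add: P_def)
  moreover have "P \<noteq> {}"
  proof
    assume "P = {}"
    then have "sum s R = 0"
      by (intro sum.neutral) (auto simp: P_def)
    with assms(2) show False
      by simp
  qed
  ultimately have "Max (F ` P) \<in> F ` P"
    by (intro Max_in) auto
  then obtain j where j: "j \<in> P" "F j = Max (F ` P)"
    by auto
  have max: "F i \<le> F j" if "i \<in> P" for i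
    using j(2) \<open>finite P\<close> that by simp
  have "real (s i) * F i \<le> real (s i) * F j" if "i \<in> R" for i
    using max[of i] that by (cases "s i = 0") (auto simp: P_def intro: mult_left_mono)
  then have "(\<Sum>i\<in>R. real (s i) * F i) \<le> (\<Sum>i\<in>R. real (s i) * F j)"
    by (rule sum_mono)
  also have "\<dots> = real (sum s R) * F j"
    by (simp add: sum_distrib_right)
  finally show thesis
    using that j(1) by (auto simp: P_def)
qed

definition capacitated_partition :: "'g set \<Rightarrow> 'a set \<Rightarrow> ('a \<Rightarrow> nat) \<Rightarrow> ('a \<Rightarrow> 'g set) \<Rightarrow> bool" where
  "capacitated_partition L R s D \<longleftrightarrow>
     disjoint_family_on D R \<and> (\<Union>j\<in>R. D j) = L \<and> (\<forall>j\<in>R. card (D j) \<le> s j)"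

lemma capacitated_partition_insert:
  assumes D: "capacitated_partition L R (s(j := s j - 1)) D"
    and "finite R" "j \<in> R" "s j > 0" "g \<notin> L" "finite L"
  shows "capacitated_partition (insert g L) R s (D(j := insert g (D j)))"
    and "(\<Sum>i\<in>R. sum (v i) ((D(j := insert g (D j))) i)) = v j g + (\<Sum>i\<in>R. sum (v i) (D i))"
proof -
  have "D j \<subseteq> L" "card (D j) \<le> s j - 1"
    using D \<open>j \<in> R\<close> by (auto simp: capacitated_partition_def)
  then have new: "g \<notin> D j" "finite (D j)"
    using \<open>g \<notin> L\<close> \<open>finite L\<close> by (auto intro: finite_subset)
  then have "card (insert g (D j)) \<le> s j"
    using \<open>card (D j) \<le> s j - 1\<close> \<open>s j > 0\<close> by simp
  with D \<open>j \<in> R\<close> \<open>g \<notin> L\<close> show "capacitated_partition (insert g L) R s (D(j := insert g (D j)))"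
    unfolding capacitated_partition_def disjoint_family_on_def by (auto split: if_splits)
  have "(\<Sum>i\<in>R - {j}. sum (v i) ((D(j := insert g (D j))) i)) = (\<Sum>i\<in>R - {j}. sum (v i) (D i))"
    by (intro sum.cong) auto
  with new \<open>j \<in> R\<close> \<open>finite R\<close>
  show "(\<Sum>i\<in>R. sum (v i) ((D(j := insert g (D j))) i)) = v j g + (\<Sum>i\<in>R. sum (v i) (D i))"
    by (simp add: sum.remove add.assoc)
qed

lemma sum_decrement_weight:
  fixes s :: "'a \<Rightarrow> nat" and w :: "'a \<Rightarrow> real"
  assumes "finite R" "j \<in> R" "s j > 0"
  shows "(\<Sum>i\<in>R. real ((s(j := s j - 1)) i) * w i) = (\<Sum>i\<in>R. real (s i) * w i) - w j"
proof -
  have "(\<Sum>i\<in>R - {j}. real ((s(j := s j - 1)) i) * w i) = (\<Sum>i\<in>R - {j}. real (s i) * w i)"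
    by (intro sum.cong) auto
  then show ?thesis
    using assms by (simp add: sum.remove of_nat_diff algebra_simps)
qed

lemma weighted_sum_insert_estimate:
  fixes R :: "'a set" and s :: "'a \<Rightarrow> nat" and v :: "'a \<Rightarrow> 'g \<Rightarrow> real"
  defines "\<psi> x \<equiv> \<Sum>i\<in>R. real (s i) * v i x"
  assumes "finite L" "g \<notin> L" "card L < sum s R"
  shows "(\<Sum>j\<in>R. real (s j) * (v j g + (sum \<psi> L - sum (v j) L) / (real (sum s R) - 1)))
    = sum \<psi> (insert g L)"
proof -
  have "(\<Sum>j\<in>R. real (s j) * sum (v j) L) = sum \<psi> L"
    unfolding \<psi>_def sum_distrib_left by (rule sum.swap)
  then have "(\<Sum>j\<in>R. real (s j) * (sum \<psi> L - sum (v j) L)) = (real (sum s R) - 1) * sum \<psi> L"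
    by (simp add: right_diff_distrib sum_subtractf sum_distrib_right[symmetric] left_diff_distrib)
  moreover have "L = {} \<or> real (sum s R) - 1 \<noteq> 0"
    using assms(2,4) by (cases "L = {}") (auto simp: card_gt_0_iff simp del: of_nat_sum)
  ultimately show ?thesis
    using assms(2,3) by (auto simp: \<psi>_def distrib_left sum.distrib sum_divide_distrib[symmetric])
qed

lemma exists_capacitated_partition:
  fixes v :: "'a \<Rightarrow> 'g \<Rightarrow> real"
  assumes "finite L" "finite R" "card L \<le> sum s R"
  obtains D where "capacitated_partition L R s D"
    "(\<Sum>g\<in>L. \<Sum>j\<in>R. real (s j) * v j g) \<le> real (sum s R) * (\<Sum>j\<in>R. sum (v j) (D j))"
  using assms(1,3)
proof (induction L arbitrary: s thesis rule: finite_induct)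
  case empty
  then show ?case
    using empty.prems(1)[of "\<lambda>_. {}"] by (simp add: capacitated_partition_def disjoint_family_on_def)
next
  case (insert g L)
  define N where "N = sum s R"
  define \<psi> where "\<psi> x = (\<Sum>i\<in>R. real (s i) * v i x)" for x
  (* F j is what the induction hypothesis guarantees (per unit of capacity) if g goes to j and
     L is split with the capacity of j lowered by one; its s-weighted average is the value of
     the fractional assignment, so the best j is at least as good.  When N = 1 the division
     is by zero, but then L = {} and the quotient is not needed. *)
  define F where "F j = v j g + (sum \<psi> L - sum (v j) L) / (real N - 1)" for j
  have card_L: "card L < N"
    using insert by (simp add: N_def)
  then have "(\<Sum>j\<in>R. real (s j) * F j) = sum \<psi> (insert g L)"
    using weighted_sum_insert_estimate[OF insert.hyps] by (simp add: F_def \<psi>_def N_def)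
  then obtain j where j: "j \<in> R" "s j > 0" "sum \<psi> (insert g L) \<le> real N * F j"
    using weighted_average_le_some[OF \<open>finite R\<close>, of s F] card_L by (auto simp: N_def)
  define s' where "s' = s(j := s j - 1)"
  have sum_s': "real (sum s' R) = real N - 1"
    using sum_decrement_weight[of R j s "\<lambda>_. 1"] j(1,2) \<open>finite R\<close> by (simp add: s'_def N_def)
  have \<psi>': "(\<Sum>i\<in>R. real (s' i) * v i x) = \<psi> x - v j x" for x
    using sum_decrement_weight[of R j s] j(1,2) \<open>finite R\<close> by (simp add: s'_def \<psi>_def)
  have "card L \<le> sum s' R"
    using card_L sum_s' by linarith
  then obtain D where D: "capacitated_partition L R s' D"
    and D_val: "(\<Sum>x\<in>L. \<Sum>i\<in>R. real (s' i) * v i x) \<le> real (sum s' R) * (\<Sum>i\<in>R. sum (v i) (D i))"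
    using insert.IH by blast
  define U where "U = (\<Sum>i\<in>R. sum (v i) (D i))"
  have "F j \<le> v j g + U"
  proof (cases "L = {}")
    case True
    then have "D i = {}" if "i \<in> R" for i
      using D that by (auto simp: capacitated_partition_def)
    with True show ?thesis
      by (simp add: F_def U_def)
  next
    case False
    then have "real N - 1 > 0"
      using card_L insert.hyps(1) card_gt_0_iff[of L] by linarith
    moreover have "sum \<psi> L - sum (v j) L \<le> (real N - 1) * U"
      using D_val sum_s' by (simp add: \<psi>' sum_subtractf U_def)
    ultimately show ?thesis
      by (simp add: F_def pos_divide_le_eq mult.commute)
  qed
  then have "sum \<psi> (insert g L) \<le> real N * (v j g + U)"
    using j(3) mult_left_mono[of "F j" "v j g + U" "real N"] by linarith
  with capacitated_partition_insert(1)[of L R s j D g] capacitated_partition_insert(2)[of L R s j D g v]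
    D j \<open>finite R\<close> insert.hyps insert.prems(1)
  show ?case
    by (simp add: s'_def \<psi>_def N_def U_def)
qed

lemma exists_subset_card_sum_ge_average:
  fixes f :: "'g \<Rightarrow> real"
  assumes "finite A" "k \<le> card A"
  obtains T where "T \<subseteq> A" "card T = k" "real k * sum f A \<le> real (card A) * sum f T"
proof -
  (* Partition A between an agent valuing it by f with capacity k and an indifferent agent. *)
  define s where "s b = (if b then k else card A - k)" for b
  define w where "w b = (if b then f else (\<lambda>_. 0))" for b
  have "card A \<le> sum s UNIV"
    using assms(2) by (simp add: s_def UNIV_bool)
  then obtain D where D: "capacitated_partition A UNIV s D"
    and D_val: "(\<Sum>g\<in>A. \<Sum>b\<in>UNIV. real (s b) * w b g) \<le> real (sum s UNIV) * (\<Sum>b\<in>UNIV. \<Sum>g\<in>D b. w b g)"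
    using exists_capacitated_partition[OF assms(1), of UNIV s] by auto
  have A_split: "A = D True \<union> D False" "D True \<inter> D False = {}"
    using D by (auto simp: capacitated_partition_def disjoint_family_on_def UNIV_bool)
  have caps: "card (D b) \<le> s b" for b
    using D by (simp add: capacitated_partition_def)
  have "card A = card (D True) + card (D False)"
    using A_split assms(1) by (simp add: card_Un_disjoint)
  then have "card (D True) = k"
    using caps[of True] caps[of False] assms(2) by (simp add: s_def)
  moreover have "D True \<subseteq> A"
    using A_split by blast
  moreover have "real k * sum f A \<le> real (card A) * sum f (D True)"
    using D_val assms(2) by (simp add: s_def w_def UNIV_bool sum_distrib_left)
  ultimately show thesis
    using that by blast
qed

lemma is_allocation_subset:
  assumes "is_allocation n M A" "i < n"
  shows "A i \<subseteq> M"
  using assms by (auto simp: is_allocation_def)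

lemma is_allocation_sum:
  assumes "is_allocation n M A" "finite M"
  shows "sum f M = (\<Sum>i<n. sum f (A i))"
proof -
  have "finite (A i)" if "i < n" for i
    using is_allocation_subset[OF assms(1) that] assms(2) by (rule finite_subset)
  then have "sum f (\<Union>i<n. A i) = (\<Sum>i<n. sum f (A i))"
    using assms(1) by (intro sum.UNION_disjoint) (auto simp: is_allocation_def)
  then show ?thesis
    using assms(1) by (simp add: is_allocation_def)
qed

lemma util_optimal_owner_value_ge:
  assumes "util_optimal n M v A" "finite M" "j < n" "i < n" "g \<in> A j"
  shows "v i g \<le> v j g"
proof (cases "i = j")
  case False
  have alloc: "is_allocation n M A"
    using assms(1) by (simp add: util_optimal_def)
  have owner: "g \<in> A x \<longleftrightarrow> x = j" if "x < n" for x
    using alloc assms(3,5) that by (auto simp: is_allocation_def)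
  have fin: "finite (A x)" if "x < n" for x
    using is_allocation_subset[OF alloc that] assms(2) by (rule finite_subset)
  define B where "B x = (if x = i then insert g (A x) else A x - {g})" for x
  have "is_allocation n M B"
    using alloc assms(3-5) owner unfolding is_allocation_def B_def by (auto split: if_splits)
  then have "usw n v B \<le> usw n v A"
    using assms(1) by (simp add: util_optimal_def)
  moreover have "util v x (B x) = util v x (A x) + (if x = i then v i g else 0) - (if x = j then v j g else 0)"
    if "x < n" for x
    using owner[OF that] fin[OF that] False by (auto simp: B_def util_def sum.remove)
  then have "usw n v B = usw n v A + v i g - v j g"
    using assms(3,4) by (simp add: usw_def sum.distrib sum_subtractf)
  ultimately show ?thesis
    by simp
qed simp

locale single_category_instance =
  fixes n k :: nat and M :: "'g set" and v :: "nat \<Rightarrow> 'g \<Rightarrow> real" and Astar :: "nat \<Rightarrow> 'g set"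
  assumes finite_M: "finite M"
    and cardinality_feasible: "card M \<le> k * n"
    and optimal: "util_optimal n M v Astar"
begin

definition over :: "nat set" where
  "over = {i. i < n \<and> k < card (Astar i)}"

definition under :: "nat set" where
  "under = {i. i < n \<and> card (Astar i) < k}"

definition slack :: "nat \<Rightarrow> nat" where
  "slack j = k - card (Astar j)"

abbreviation total_slack :: nat where
  "total_slack \<equiv> sum slack under"

definition avg_val :: "'g \<Rightarrow> real" where
  "avg_val g = (\<Sum>j\<in>under. real (slack j) * v j g) / real total_slack"

(* The bound of the statement with u_idag replaced by w, including its leading 1 = u_idag(M). *)

definition welfare_bound :: "('g \<Rightarrow> real) \<Rightarrow> real" where
  "welfare_bound w = sum w M +
     (\<Sum>i\<in>over. real k / real (card (Astar i)) * (util v i (Astar i) - sum w (Astar i)))"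

lemma Astar_allocation: "is_allocation n M Astar"
  using optimal by (simp add: util_optimal_def)

lemma finite_Astar: "i < n \<Longrightarrow> finite (Astar i)"
  using is_allocation_subset[OF Astar_allocation] finite_M by (rule finite_subset)

lemma Astar_disjoint: "i < n \<Longrightarrow> j < n \<Longrightarrow> i \<noteq> j \<Longrightarrow> Astar i \<inter> Astar j = {}"
  using Astar_allocation by (simp add: is_allocation_def)

lemma finite_over: "finite over" and finite_under: "finite under"
  by (simp_all add: over_def under_def)

lemma excess_le_total_slack: "(\<Sum>i\<in>over. card (Astar i) - k) \<le> total_slack"
proof -
  define d where "d i = real (card (Astar i)) - real k" for i
  have "real (card M) \<le> real k * real n"
    using cardinality_feasible by (metis of_nat_le_iff of_nat_mult)
  then have "(\<Sum>i<n. d i) \<le> 0"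
    using is_allocation_sum[OF Astar_allocation finite_M, of "\<lambda>_. 1::real"]
    by (simp add: d_def sum_subtractf mult.commute)
  moreover have "(\<Sum>i<n. d i) = (\<Sum>i\<in>over. d i) + (\<Sum>i\<in>under. d i)"
  proof -
    have "(\<Sum>i<n. d i) = (\<Sum>i\<in>over \<union> under. d i)"
      by (intro sum.mono_neutral_right) (auto simp: over_def under_def d_def)
    moreover have "over \<inter> under = {}"
      by (auto simp: over_def under_def)
    ultimately show ?thesis
      by (simp add: sum.union_disjoint finite_over finite_under)
  qed
  moreover have "real (\<Sum>i\<in>over. card (Astar i) - k) = (\<Sum>i\<in>over. d i)"
    by (simp add: d_def over_def of_nat_diff)
  moreover have "real total_slack = - (\<Sum>i\<in>under. d i)"
    by (simp add: d_def slack_def under_def of_nat_diff sum_negf[symmetric])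
  ultimately show ?thesis
    by linarith
qed

lemma total_slack_pos:
  assumes "over \<noteq> {}"
  shows "0 < total_slack"
proof -
  obtain i where "i \<in> over"
    using assms by blast
  then have "0 < card (Astar i) - k"
    by (simp add: over_def)
  also have "\<dots> \<le> (\<Sum>i\<in>over. card (Astar i) - k)"
    using \<open>i \<in> over\<close> finite_over by (intro member_le_sum) auto
  finally show ?thesis
    using excess_le_total_slack by linarith
qed

lemma sum_avg_val:
  assumes "0 < total_slack"
  shows "real total_slack * sum avg_val B = (\<Sum>j\<in>under. real (slack j) * util v j B)"
proof -
  have "sum avg_val B = (\<Sum>g\<in>B. \<Sum>j\<in>under. real (slack j) * v j g) / real total_slack"
    unfolding avg_val_def by (rule sum_divide_distrib[symmetric])
  also have "\<dots> = (\<Sum>j\<in>under. real (slack j) * util v j B) / real total_slack"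
    by (simp add: util_def sum_distrib_left sum.swap[of _ B])
  finally show ?thesis
    using assms by (simp del: of_nat_sum)
qed

lemma sum_avg_val_le_util:
  assumes "0 < total_slack" "i < n"
  shows "sum avg_val (Astar i) \<le> util v i (Astar i)"
proof -
  have "util v j (Astar i) \<le> util v i (Astar i)" if "j \<in> under" for j
    using that assms(2) util_optimal_owner_value_ge[OF optimal finite_M]
    unfolding util_def by (intro sum_mono) (auto simp: under_def)
  then have "(\<Sum>j\<in>under. real (slack j) * util v j (Astar i)) \<le> real total_slack * util v i (Astar i)"
    by (simp add: sum_distrib_right sum_mono mult_left_mono)
  then have "real total_slack * sum avg_val (Astar i) \<le> real total_slack * util v i (Astar i)"
    by (simp only: sum_avg_val[OF assms(1)])
  with assms(1) show ?thesis
    by (simp del: of_nat_sum)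
qed

lemma welfare_bound_avg_val:
  assumes "0 < total_slack"
  shows "(\<Sum>j\<in>under. real (slack j) * welfare_bound (v j)) = real total_slack * welfare_bound avg_val"
proof -
  define a where "a i = real k / real (card (Astar i))" for i
  define C where "C = (\<Sum>i\<in>over. a i * util v i (Astar i))"
  define N where "N = real total_slack"
  have avg: "(\<Sum>j\<in>under. real (slack j) * sum (v j) B) = N * sum avg_val B" for B
    using sum_avg_val[OF assms] by (simp add: util_def N_def)
  have wb: "welfare_bound w = sum w M + C - (\<Sum>i\<in>over. a i * sum w (Astar i))" for w
    by (simp add: welfare_bound_def C_def a_def right_diff_distrib sum_subtractf)
  have "(\<Sum>j\<in>under. real (slack j) * (\<Sum>i\<in>over. a i * sum (v j) (Astar i)))
      = (\<Sum>i\<in>over. a i * (\<Sum>j\<in>under. real (slack j) * sum (v j) (Astar i)))"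
    by (simp add: sum_distrib_left sum.swap[of _ under over] mult.left_commute)
  then have "(\<Sum>j\<in>under. real (slack j) * welfare_bound (v j))
      = N * sum avg_val M + N * C - (\<Sum>i\<in>over. a i * (N * sum avg_val (Astar i)))"
    by (simp add: wb avg N_def distrib_left right_diff_distrib sum.distrib sum_subtractf
        sum_distrib_right[symmetric])
  also have "\<dots> = N * welfare_bound avg_val"
    by (simp add: wb right_diff_distrib distrib_left sum_distrib_left mult.left_commute)
  finally show ?thesis
    by (simp add: N_def)
qed

lemma exists_capacitated_partition_avg_val:
  assumes "0 < total_slack" "finite B" "card B \<le> total_slack"
  obtains D where "capacitated_partition B under slack D" "sum avg_val B \<le> (\<Sum>j\<in>under. util v j (D j))"
proof -
  obtain D where D: "capacitated_partition B under slack D"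
    and D_val: "(\<Sum>g\<in>B. \<Sum>j\<in>under. real (slack j) * v j g) \<le> real total_slack * (\<Sum>j\<in>under. util v j (D j))"
    using exists_capacitated_partition[OF assms(2) finite_under assms(3)] by (auto simp: util_def)
  have "real total_slack * sum avg_val B = (\<Sum>j\<in>under. real (slack j) * util v j B)"
    by (rule sum_avg_val[OF assms(1)])
  also have "\<dots> = (\<Sum>g\<in>B. \<Sum>j\<in>under. real (slack j) * v j g)"
    unfolding util_def sum_distrib_left by (rule sum.swap)
  finally have "real total_slack * sum avg_val B \<le> real total_slack * (\<Sum>j\<in>under. util v j (D j))"
    using D_val by linarith
  with assms(1) D show thesis
    using that by (simp del: of_nat_sum)
qed

definition good_trim :: "(nat \<Rightarrow> 'g set) \<Rightarrow> bool" where
  "good_trim T \<longleftrightarrow> (\<forall>i\<in>over. T i \<subseteq> Astar i \<and> card (T i) = k \<and>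
     real k / real (card (Astar i)) * (util v i (Astar i) - sum avg_val (Astar i))
       \<le> util v i (T i) - sum avg_val (T i))"

lemma exists_good_trim: obtains T where "good_trim T"
proof -
  have "\<exists>T. T \<subseteq> Astar i \<and> card T = k \<and>
      real k / real (card (Astar i)) * (util v i (Astar i) - sum avg_val (Astar i))
        \<le> util v i T - sum avg_val T" if "i \<in> over" for i
  proof -
    have i: "i < n" "0 < card (Astar i)" "k \<le> card (Astar i)"
      using that by (auto simp: over_def)
    obtain T where "T \<subseteq> Astar i" "card T = k"
      "real k * (\<Sum>g\<in>Astar i. v i g - avg_val g) \<le> real (card (Astar i)) * (\<Sum>g\<in>T. v i g - avg_val g)"
      using exists_subset_card_sum_ge_average[OF finite_Astar[OF i(1)] i(3)] .
    with i show ?thesis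
      by (intro exI[of _ T]) (simp add: util_def sum_subtractf field_simps)
  qed
  then show thesis
    using that unfolding good_trim_def by metis
qed

lemma good_trim_subset_card: "good_trim T \<Longrightarrow> \<forall>i\<in>over. T i \<subseteq> Astar i \<and> card (T i) = k"
  by (simp add: good_trim_def)

definition kept :: "(nat \<Rightarrow> 'g set) \<Rightarrow> nat \<Rightarrow> 'g set" where
  "kept T i = (if i \<in> over then T i else Astar i)"

definition leftover :: "(nat \<Rightarrow> 'g set) \<Rightarrow> 'g set" where
  "leftover T = (\<Union>i\<in>over. Astar i - T i)"

definition reallocation :: "(nat \<Rightarrow> 'g set) \<Rightarrow> (nat \<Rightarrow> 'g set) \<Rightarrow> nat \<Rightarrow> 'g set" where
  "reallocation T D i = kept T i \<union> (if i \<in> under then D i else {})"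

lemma kept_subset:
  assumes "\<forall>i\<in>over. T i \<subseteq> Astar i"
  shows "kept T i \<subseteq> Astar i"
  using assms by (simp add: kept_def)

lemma kept_leftover_disjoint:
  assumes "\<forall>i\<in>over. T i \<subseteq> Astar i" "i < n"
  shows "kept T i \<inter> leftover T = {}"
proof -
  have "g \<in> T j" if "g \<in> kept T i" "j \<in> over" "g \<in> Astar j" for g j
  proof -
    have "j < n" "g \<in> Astar i"
      using that kept_subset[OF assms(1)] by (auto simp: over_def)
    then have "i = j"
      using Astar_disjoint assms(2) that(3) by blast
    with that show ?thesis
      by (simp add: kept_def)
  qed
  then show ?thesis
    by (auto simp: leftover_def)
qed

lemma kept_union_leftover:
  assumes "\<forall>i\<in>over. T i \<subseteq> Astar i"
  shows "(\<Union>i<n. kept T i) \<union> leftover T = M"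
proof -
  have "(\<Union>i<n. kept T i) \<union> leftover T = (\<Union>i<n. Astar i)"
    using assms by (auto simp: kept_def leftover_def over_def split: if_splits)
  then show ?thesis
    using Astar_allocation by (simp add: is_allocation_def)
qed

lemma finite_leftover: "finite (leftover T)"
  using finite_over finite_Astar by (auto simp: leftover_def over_def)

lemma sum_leftover: "sum f (leftover T) = (\<Sum>i\<in>over. sum f (Astar i - T i))"
  unfolding leftover_def using finite_over finite_Astar Astar_disjoint
  by (intro sum.UNION_disjoint) (auto simp: over_def)

lemma card_leftover:
  assumes "\<forall>i\<in>over. T i \<subseteq> Astar i \<and> card (T i) = k"
  shows "card (leftover T) = (\<Sum>i\<in>over. card (Astar i) - k)"
proof -
  have "card (leftover T) = (\<Sum>i\<in>over. card (Astar i - T i))"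
    using sum_leftover[of "\<lambda>_. 1::nat" T] by (simp add: card_eq_sum[symmetric])
  also have "\<dots> = (\<Sum>i\<in>over. card (Astar i) - k)"
    using assms finite_Astar by (intro sum.cong refl) (auto simp: card_Diff_subset finite_subset over_def)
  finally show ?thesis .
qed

lemma reallocation_is_allocation:
  assumes "\<forall>i\<in>over. T i \<subseteq> Astar i" "capacitated_partition (leftover T) under slack D"
  shows "is_allocation n M (reallocation T D)"
proof -
  define extra where "extra j = (if j \<in> under then D j else {})" for j
  have realloc: "reallocation T D i = kept T i \<union> extra i" for i
    by (simp add: reallocation_def extra_def)
  have extra_leftover: "extra j \<subseteq> leftover T" for j
    using assms(2) by (auto simp: extra_def capacitated_partition_def)
  have extra_disjoint: "extra i \<inter> extra j = {}" if "i \<noteq> j" for i j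
    using assms(2) that by (simp add: extra_def capacitated_partition_def disjoint_family_on_def)
  have "kept T i \<inter> kept T j = {}" if "i < n" "j < n" "i \<noteq> j" for i j
    using kept_subset[OF assms(1)] Astar_disjoint[OF that] by blast
  then have "reallocation T D i \<inter> reallocation T D j = {}" if "i < n" "j < n" "i \<noteq> j" for i j
    using that extra_leftover extra_disjoint kept_leftover_disjoint[OF assms(1)]
    unfolding realloc by blast
  moreover have "(\<Union>i<n. extra i) = leftover T"
    using assms(2) by (auto simp: extra_def under_def capacitated_partition_def split: if_splits)
  ultimately show ?thesis
    using kept_union_leftover[OF assms(1)] by (auto simp: is_allocation_def realloc)
qed

lemma reallocation_is_cardinal:
  assumes "\<forall>i\<in>over. T i \<subseteq> Astar i \<and> card (T i) = k" "capacitated_partition (leftover T) under slack D"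
  shows "is_cardinal n k (reallocation T D)"
  unfolding is_cardinal_def
proof (intro allI impI)
  fix i assume "i < n"
  consider "i \<in> over" | "i \<in> under" | "card (Astar i) = k"
    using \<open>i < n\<close> by (force simp: over_def under_def)
  then show "card (reallocation T D i) \<le> k"
  proof cases
    case 1
    then show ?thesis
      using assms(1) by (auto simp: reallocation_def kept_def under_def over_def)
  next
    case 2
    then have "card (Astar i) + card (D i) \<le> k"
      using assms(2) by (auto simp: capacitated_partition_def slack_def under_def)
    with 2 show ?thesis
      using card_Un_le[of "Astar i" "D i"]
      by (auto simp: reallocation_def kept_def under_def over_def)
  next
    case 3
    then show ?thesis
      by (auto simp: reallocation_def kept_def under_def over_def)
  qed
qed

lemma usw_reallocation:
  assumes "\<forall>i\<in>over. T i \<subseteq> Astar i" "capacitated_partition (leftover T) under slack D"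
  shows "usw n v (reallocation T D) = (\<Sum>i<n. util v i (kept T i)) + (\<Sum>j\<in>under. util v j (D j))"
proof -
  have "util v i (reallocation T D i) = util v i (kept T i) + (if i \<in> under then util v i (D i) else 0)"
    if "i < n" for i
  proof (cases "i \<in> under")
    case True
    then have "D i \<subseteq> leftover T"
      using assms(2) by (auto simp: capacitated_partition_def)
    then have "kept T i \<inter> D i = {}" "finite (D i)"
      using kept_leftover_disjoint[OF assms(1) that] finite_leftover by (auto intro: finite_subset)
    moreover have "finite (kept T i)"
      using kept_subset[OF assms(1)] finite_Astar[OF that] by (rule finite_subset)
    ultimately show ?thesis
      using True by (simp add: reallocation_def util_def sum.union_disjoint)
  qed (simp add: reallocation_def)
  then have "usw n v (reallocation T D)
      = (\<Sum>i<n. util v i (kept T i)) + (\<Sum>i<n. if i \<in> under then util v i (D i) else 0)"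
    by (simp add: usw_def sum.distrib)
  also have "(\<Sum>i<n. if i \<in> under then util v i (D i) else 0) = (\<Sum>j\<in>under. util v j (D j))"
    by (simp add: sum.If_cases under_def Int_def)
  finally show ?thesis .
qed

lemma welfare_bound_le_usw_reallocation:
  assumes "0 < total_slack" "good_trim T"
    and D: "capacitated_partition (leftover T) under slack D"
    and D_val: "sum avg_val (leftover T) \<le> (\<Sum>j\<in>under. util v j (D j))"
  shows "welfare_bound avg_val \<le> usw n v (reallocation T D)"
proof -
  define gain where "gain i = real k / real (card (Astar i)) * (util v i (Astar i) - sum avg_val (Astar i))" for i
  have T_sub: "\<forall>i\<in>over. T i \<subseteq> Astar i"
    using good_trim_subset_card[OF assms(2)] by blast
  have restrict: "(\<Sum>i<n. if i \<in> over then f i else 0) = sum f over" for f :: "nat \<Rightarrow> real"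
    by (simp add: sum.If_cases over_def Int_def)
  have agent: "sum avg_val (Astar i) + (if i \<in> over then gain i else 0)
      \<le> util v i (kept T i) + (if i \<in> over then sum avg_val (Astar i - T i) else 0)" if "i < n" for i
  proof (cases "i \<in> over")
    case True
    then have "sum avg_val (Astar i - T i) = sum avg_val (Astar i) - sum avg_val (T i)"
      using T_sub finite_Astar[OF that] by (simp add: sum_diff)
    with True assms(2) show ?thesis
      by (simp add: kept_def good_trim_def gain_def)
  next
    case False
    then show ?thesis
      using sum_avg_val_le_util[OF assms(1) that] by (simp add: kept_def)
  qed
  have "welfare_bound avg_val = (\<Sum>i<n. sum avg_val (Astar i) + (if i \<in> over then gain i else 0))"
    by (simp add: welfare_bound_def gain_def is_allocation_sum[OF Astar_allocation finite_M]
        sum.distrib restrict)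
  also have "\<dots> \<le> (\<Sum>i<n. util v i (kept T i) + (if i \<in> over then sum avg_val (Astar i - T i) else 0))"
    using agent by (intro sum_mono) simp
  also have "\<dots> = (\<Sum>i<n. util v i (kept T i)) + sum avg_val (leftover T)"
    by (simp add: sum.distrib restrict sum_leftover)
  also have "\<dots> \<le> usw n v (reallocation T D)"
    using D_val usw_reallocation[OF T_sub D] by simp
  finally show ?thesis .
qed

lemma exists_cardinal_allocation_ge_welfare_bound:
  assumes "0 < total_slack"
  obtains A where "is_allocation n M A" "is_cardinal n k A" "welfare_bound avg_val \<le> usw n v A"
proof -
  obtain T where T: "good_trim T"
    using exists_good_trim .
  have "card (leftover T) \<le> total_slack"
    using card_leftover[OF good_trim_subset_card[OF T]] excess_le_total_slack by simp
  then obtain D where D: "capacitated_partition (leftover T) under slack D"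
    and "sum avg_val (leftover T) \<le> (\<Sum>j\<in>under. util v j (D j))"
    using exists_capacitated_partition_avg_val[OF assms finite_leftover] by blast
  with T assms good_trim_subset_card[OF T] show thesis
    using that reallocation_is_allocation[OF _ D] reallocation_is_cardinal[OF _ D]
      welfare_bound_le_usw_reallocation[OF assms T D] by blast
qed

lemma exists_under_welfare_bound_le:
  assumes "0 < total_slack"
  obtains j where "j \<in> under" "welfare_bound (v j) \<le> welfare_bound avg_val"
proof -
  obtain j where "j \<in> under"
    "(\<Sum>i\<in>under. real (slack i) * - welfare_bound (v i)) \<le> real total_slack * - welfare_bound (v j)"
    using weighted_average_le_some[OF finite_under assms, of "\<lambda>i. - welfare_bound (v i)"] by blast
  moreover have "(\<Sum>i\<in>under. real (slack i) * - welfare_bound (v i)) = - (real total_slack * welfare_bound avg_val)"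
    using welfare_bound_avg_val[OF assms] by (simp add: sum_negf)
  ultimately show thesis
    using that assms by (simp del: of_nat_sum)
qed

end

theorem lemma4:
  fixes n k :: nat and M :: "'g set" and v :: "nat \<Rightarrow> 'g \<Rightarrow> real"
    and Astar :: "nat \<Rightarrow> 'g set"
  assumes "finite M"
    and "normalized_additive n M v"
    and "card M \<le> k * n"
    and "util_optimal n M v Astar"
    and "{i. i < n \<and> card (Astar i) > k} \<noteq> {}"
  shows "\<exists>idag \<in> {i. i < n \<and> card (Astar i) < k}. \<exists>A.
           is_allocation n M A \<and> is_cardinal n k A \<and>
           usw n v A \<ge> 1 + (\<Sum>i\<in>{i. i < n \<and> card (Astar i) > k}.
              (real k / real (card (Astar i))) * (util v i (Astar i) - util v idag (Astar i)))"
proof -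
  interpret single_category_instance n k M v Astar
    using assms(1,3,4) by unfold_locales
  have slack_pos: "0 < total_slack"
    using assms(5) total_slack_pos by (simp add: over_def)
  obtain A where A: "is_allocation n M A" "is_cardinal n k A" "welfare_bound avg_val \<le> usw n v A"
    using exists_cardinal_allocation_ge_welfare_bound[OF slack_pos] .
  obtain j where j: "j \<in> under" "welfare_bound (v j) \<le> welfare_bound avg_val"
    using exists_under_welfare_bound_le[OF slack_pos] .
  have "sum (v j) M = 1"
    using assms(2) j(1) by (simp add: normalized_additive_def util_def under_def)
  then have "welfare_bound (v j) = 1 + (\<Sum>i\<in>over. real k / real (card (Astar i)) *
      (util v i (Astar i) - util v j (Astar i)))"
    by (simp add: welfare_bound_def util_def)
  with A j show ?thesis
    unfolding over_def under_def by fastforce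
qed

end
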